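(* Let $R$ be a root system in $\mathbb{R}^N$ and let $R'=\{\alpha_1,\dots,\alpha_n\}$ be a positive orthogonal subsystem of $R$. For $i=1,\dots,n$ let $\tau_{\alpha_i}(x)=x-\frac{\langle x,\alpha_i\rangle}{|\alpha_i|^2}\alpha_i$ and define the operator $\rho_i$ on the space $\Pi^N$ of polynomial functions on $\mathbb{R}^N$ by $$(\rho_i f)(x)=\frac{f(x)-f(\tau_{\alpha_i}x)}{\langle x,\alpha_i\rangle}.$$ Then: (i) for all $i,j=1,\dots,n$, $[\rho_i,\rho_j]=\rho_i\rho_j-\rho_j\rho_i=0$; (ii) if $\alpha\in\mathbb{R}^N$ is orthogonal to $\alpha_i$, then $[\partial_\alpha,\rho_i]=0$, where $\partial_\alpha$ denotes the directional derivative in direction $\alpha$.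
   Context: $\langle\cdot,\cdot\rangle$ is the Euclidean inner product on $\mathbb{R}^N$ and $|x|=\sqrt{\langle x,x\rangle}$. A root system is a finite set $R\subset\mathbb{R}^N\setminus\{0\}$ with $s_\alpha(R)=R$ and $R\cap\mathbb{R}\alpha=\{\pm\alpha\}$ for all $\alpha\in R$, where $s_\alpha(x)=x-2\frac{\langle x,\alpha\rangle}{|\alpha|^2}\alpha$. A subsystem $R''$ of $R$ is a subset such that $\alpha\in R''\Rightarrow-\alpha\in R''$, and $\alpha,\beta\in R''$, $\alpha+\beta\in R\Rightarrow\alpha+\beta\in R''$; it is an orthogonal subsystem if its roots are pairwise orthogonal (apart from $\pm$ pairs). A positive orthogonal subsystem $R'$ is a subset of an orthogonal subsystem $R''$ with $R''=R'\cup(-R')$, $R'\cap(-R')=\emptyset$; so the elements of $R'$ are pairwise orthogonal. Each $\rho_i$ maps polynomials to polynomials. *)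

theory Defs
  imports "HOL-Analysis.Analysis"
begin

definition refl_root :: "real^'n \<Rightarrow> real^'n \<Rightarrow> real^'n" where
  "refl_root a x = x - (2 * inner x a / (norm a)^2) *\<^sub>R a"

definition root_system :: "(real^'n) set \<Rightarrow> bool" where
  "root_system R \<longleftrightarrow> finite R \<and> 0 \<notin> R \<and>
     (\<forall>a\<in>R. refl_root a ` R = R) \<and>
     (\<forall>a\<in>R. R \<inter> {c *\<^sub>R a | c. True} = {a, -a})"

definition subsystem :: "(real^'n) set \<Rightarrow> (real^'n) set \<Rightarrow> bool" where
  "subsystem R S \<longleftrightarrow> S \<subseteq> R \<and> (\<forall>a\<in>S. -a \<in> S) \<and>
     (\<forall>a\<in>S. \<forall>b\<in>S. a + b \<in> R \<longrightarrow> a + b \<in> S)"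

definition orthogonal_subsystem :: "(real^'n) set \<Rightarrow> (real^'n) set \<Rightarrow> bool" where
  "orthogonal_subsystem R S \<longleftrightarrow> subsystem R S \<and>
     (\<forall>a\<in>S. \<forall>b\<in>S. b \<noteq> a \<and> b \<noteq> -a \<longrightarrow> inner a b = 0)"

definition positive_orthogonal_subsystem :: "(real^'n) set \<Rightarrow> (real^'n) set \<Rightarrow> bool" where
  "positive_orthogonal_subsystem R P \<longleftrightarrow>
     (\<exists>S. orthogonal_subsystem R S \<and> S = P \<union> uminus ` P \<and> P \<inter> uminus ` P = {})"

inductive polyfun :: "(real^'n \<Rightarrow> real) \<Rightarrow> bool" where
  const: "polyfun (\<lambda>x. c)"
| coord: "polyfun (\<lambda>x. x $ k)"
| add: "polyfun f \<Longrightarrow> polyfun g \<Longrightarrow> polyfun (\<lambda>x. f x + g x)"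
| mult: "polyfun f \<Longrightarrow> polyfun g \<Longrightarrow> polyfun (\<lambda>x. f x * g x)"

definition tau :: "real^'n \<Rightarrow> real^'n \<Rightarrow> real^'n" where
  "tau a x = x - (inner x a / (norm a)^2) *\<^sub>R a"

definition rho :: "real^'n \<Rightarrow> (real^'n \<Rightarrow> real) \<Rightarrow> (real^'n \<Rightarrow> real)" where
  "rho a f = (THE g. polyfun g \<and>
      (\<forall>x. inner x a \<noteq> 0 \<longrightarrow> g x = (f x - f (tau a x)) / inner x a))"

definition dir_deriv :: "real^'n \<Rightarrow> (real^'n \<Rightarrow> real) \<Rightarrow> (real^'n \<Rightarrow> real)" where
  "dir_deriv v f = (\<lambda>x. frechet_derivative f (at x) v)"

end

theory Submission
  imports Defs
begin

text \<open>
  Off the hyperplane \<open>\<langle>x,a\<rangle> = 0\<close> the polynomial \<open>rho a f\<close> is the difference quotient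
  \<open>(f x - f (tau a x)) / \<langle>x,a\<rangle>\<close>, and being continuous it is determined by these values.
  For orthogonal \<open>a\<close>, \<open>b\<close> the projections \<open>tau a\<close>, \<open>tau b\<close> commute and each preserves the
  other's linear form, so both \<open>rho a (rho b f)\<close> and \<open>rho b (rho a f)\<close> equal the symmetric
  second difference \<open>(f x - f (tau a x) - f (tau b x) + f (tau a (tau b x))) / (\<langle>x,a\<rangle> \<langle>x,b\<rangle>)\<close>.
  For \<open>v\<close> orthogonal to \<open>a\<close>, \<open>tau a\<close> commutes with translation along \<open>v\<close> and \<open>\<langle>x,a\<rangle>\<close> is
  constant along \<open>v\<close>, so differentiating the difference quotient along \<open>v\<close> yields the
  difference quotient of the derivative.
\<close>

lemma polyfun_diff: "polyfun f \<Longrightarrow> polyfun g \<Longrightarrow> polyfun (\<lambda>x. f x - g x)"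
  using polyfun.add[OF _ polyfun.mult[OF polyfun.const[of "-1"]], of f g] by simp

lemma polyfun_sum: "finite S \<Longrightarrow> (\<And>i. i \<in> S \<Longrightarrow> polyfun (f i)) \<Longrightarrow> polyfun (\<lambda>x. \<Sum>i\<in>S. f i x)"
proof (induction S rule: finite_induct)
  case empty
  then show ?case using polyfun.const[of 0] by simp
next
  case (insert a S)
  then show ?case using polyfun.add[of "f a" "\<lambda>x. \<Sum>i\<in>S. f i x"] by simp
qed

lemma polyfun_inner: "polyfun (\<lambda>x::real^'n. inner x a)"
proof -
  have "polyfun (\<lambda>x::real^'n. \<Sum>i\<in>UNIV. x $ i * a $ i)"
    by (rule polyfun_sum) (auto intro: polyfun.mult polyfun.coord polyfun.const)
  then show ?thesis by (simp add: inner_vec_def)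
qed

lemma polyfun_compose:
  "polyfun f \<Longrightarrow> (\<And>k. polyfun (\<lambda>x. L x $ k)) \<Longrightarrow> polyfun (\<lambda>x. f (L x))"
  by (induction f rule: polyfun.induct) (auto intro: polyfun.intros)

lemma polyfun_tau: "polyfun f \<Longrightarrow> polyfun (\<lambda>x. f (tau a x))"
proof (rule polyfun_compose)
  fix k
  have "polyfun (\<lambda>x. x $ k - inner x a * (\<lambda>x. a $ k / (norm a)^2) x)"
    by (intro polyfun_diff polyfun.mult polyfun_inner polyfun.coord polyfun.const)
  then show "polyfun (\<lambda>x. tau a x $ k)" by (simp add: tau_def)
qed

lemma polyfun_isCont: "polyfun f \<Longrightarrow> isCont f x"
  by (induction f rule: polyfun.induct) (auto intro!: continuous_intros)

lemma polyfun_differentiable: "polyfun f \<Longrightarrow> f differentiable (at x)"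
  by (induction f rule: polyfun.induct)
    (auto intro: differentiable_add differentiable_mult bounded_linear_imp_differentiable
      bounded_linear_vec_nth)

lemma polyfun_dir_deriv:
  fixes f :: "real^'n \<Rightarrow> real"
  shows "polyfun f \<Longrightarrow> polyfun (dir_deriv v f)"
  unfolding dir_deriv_def
proof (induction f rule: polyfun.induct)
  case (const c)
  then show ?case by (simp add: polyfun.const)
next
  case (coord k)
  have "frechet_derivative (\<lambda>x::real^'n. x $ k) (at x) = (\<lambda>h. h $ k)" for x
    by (rule frechet_derivative_at[symmetric], rule bounded_linear_imp_has_derivative)
      (rule bounded_linear_vec_nth)
  then show ?case by (simp add: polyfun.const)
next
  case (add f g)
  have "frechet_derivative (\<lambda>x. f x + g x) (at x)
      = (\<lambda>h. frechet_derivative f (at x) h + frechet_derivative g (at x) h)" for x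
    by (rule frechet_derivative_at[symmetric], rule has_derivative_add)
      (use add polyfun_differentiable in \<open>auto simp: frechet_derivative_works[symmetric]\<close>)
  then show ?case using add by (auto intro: polyfun.add)
next
  case (mult f g)
  have "frechet_derivative (\<lambda>x. f x * g x) (at x)
      = (\<lambda>h. f x * frechet_derivative g (at x) h + frechet_derivative f (at x) h * g x)" for x
    by (rule frechet_derivative_at[symmetric], rule has_derivative_mult)
      (use mult polyfun_differentiable in \<open>auto simp: frechet_derivative_works[symmetric]\<close>)
  then show ?case using mult by (auto intro!: polyfun.add polyfun.mult)
qed

lemma has_real_derivative_dir_deriv:
  fixes f :: "real^'n \<Rightarrow> real"
  assumes "f differentiable (at y)"
  shows "((\<lambda>t. f (y + t *\<^sub>R v)) has_real_derivative dir_deriv v f y) (at 0)"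
proof -
  let ?F = "frechet_derivative f (at y)"
  have fd: "(f has_derivative ?F) (at (y + 0 *\<^sub>R v))"
    using assms by (simp add: frechet_derivative_works)
  have ld: "((\<lambda>t. y + t *\<^sub>R v) has_derivative (\<lambda>t. t *\<^sub>R v)) (at (0::real))"
    by (auto intro!: derivative_eq_intros)
  have "((\<lambda>t. f (y + t *\<^sub>R v)) has_derivative (\<lambda>t. ?F (t *\<^sub>R v))) (at 0)"
    using has_derivative_compose[OF ld fd] by (simp add: o_def)
  moreover have "(\<lambda>t. ?F (t *\<^sub>R v)) = (\<lambda>t. ?F v * t)"
    using has_derivative_linear[OF fd] by (auto simp: linear_scale)
  ultimately show ?thesis by (simp add: has_field_derivative_def dir_deriv_def)
qed

text \<open>Approach \<open>x\<close> along a line in a direction \<open>d\<close> transversal to both hyperplanes.\<close>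

lemma continuous_eq_off_hyperplanes:
  fixes g h :: "real^'n \<Rightarrow> real"
  assumes cg: "\<And>x. isCont g x" and ch: "\<And>x. isCont h x"
    and da: "inner d a \<noteq> 0" and db: "inner d b \<noteq> 0"
    and eq: "\<And>x. inner x a \<noteq> 0 \<Longrightarrow> inner x b \<noteq> 0 \<Longrightarrow> g x = h x"
  shows "g = h"
proof
  fix x
  let ?y = "\<lambda>t::real. x + t *\<^sub>R d"
  have ly: "(?y \<longlongrightarrow> x) (at 0)"
    by (auto intro!: tendsto_eq_intros)
  have "eventually (\<lambda>t. t \<noteq> - inner x a / inner d a \<and> t \<noteq> - inner x b / inner d b) (at 0)"
    by (intro eventually_conj eventually_neq_at_within)
  then have "eventually (\<lambda>t. g (?y t) = h (?y t)) (at 0)"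
    by (rule eventually_mono) (use da db in \<open>auto intro!: eq simp: inner_add_left field_simps\<close>)
  then have "((\<lambda>t. h (?y t)) \<longlongrightarrow> g x) (at 0)"
    using isCont_tendsto_compose[OF cg ly] by (rule Lim_transform_eventually[rotated])
  then show "g x = h x"
    using isCont_tendsto_compose[OF ch ly] tendsto_unique[OF trivial_limit_at] by blast
qed

lemma continuous_eq_off_hyperplane:
  fixes g h :: "real^'n \<Rightarrow> real"
  assumes "\<And>x. isCont g x" "\<And>x. isCont h x" "a \<noteq> 0"
    and "\<And>x. inner x a \<noteq> 0 \<Longrightarrow> g x = h x"
  shows "g = h"
  by (rule continuous_eq_off_hyperplanes[of g h a a a]) (use assms in auto)

lemma ex_polyfun_difference_quotient:
  fixes a :: "real^'n"
  assumes a: "a \<noteq> 0"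
  shows "polyfun f \<Longrightarrow>
    \<exists>g. polyfun g \<and> (\<forall>x. inner x a \<noteq> 0 \<longrightarrow> g x = (f x - f (tau a x)) / inner x a)"
proof (induction f rule: polyfun.induct)
  case (const c)
  show ?case by (rule exI[of _ "\<lambda>x. 0"]) (simp add: polyfun.const)
next
  case (coord k)
  show ?case
    by (rule exI[of _ "\<lambda>x. a $ k / (norm a)^2"]) (use a in \<open>simp add: polyfun.const tau_def field_simps\<close>)
next
  case (add f g)
  then obtain q r where
    "polyfun q" "\<forall>x. inner x a \<noteq> 0 \<longrightarrow> q x = (f x - f (tau a x)) / inner x a"
    "polyfun r" "\<forall>x. inner x a \<noteq> 0 \<longrightarrow> r x = (g x - g (tau a x)) / inner x a" by blast
  then show ?case
    by (intro exI[of _ "\<lambda>x. q x + r x"]) (auto intro: polyfun.add simp: field_simps)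
next
  case (mult f g)
  then obtain q r where q:
    "polyfun q" "\<forall>x. inner x a \<noteq> 0 \<longrightarrow> q x = (f x - f (tau a x)) / inner x a"
    and r: "polyfun r" "\<forall>x. inner x a \<noteq> 0 \<longrightarrow> r x = (g x - g (tau a x)) / inner x a" by blast
  \<comment> \<open>the product rule \<open>fg - f'g' = f (g - g') + g' (f - f')\<close> for the difference quotient\<close>
  show ?case
  proof (intro exI[of _ "\<lambda>x. f x * r x + g (tau a x) * q x"] conjI allI impI)
    show "polyfun (\<lambda>x. f x * r x + g (tau a x) * q x)"
      using q r mult polyfun_tau[of g a] by (auto intro: polyfun.add polyfun.mult)
    fix x :: "real^'n" assume xa: "inner x a \<noteq> 0"
    then have qx: "q x = (f x - f (tau a x)) / inner x a"
      and rx: "r x = (g x - g (tau a x)) / inner x a"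
      using q r by blast+
    show "f x * r x + g (tau a x) * q x
        = (f x * g x - f (tau a x) * g (tau a x)) / inner x a"
      unfolding qx rx using xa by (simp add: field_simps algebra_simps)
  qed
qed

lemma
  fixes a :: "real^'n"
  assumes "a \<noteq> 0" and "polyfun f"
  shows polyfun_rho: "polyfun (rho a f)"
    and rho_eq: "inner x a \<noteq> 0 \<Longrightarrow> rho a f x = (f x - f (tau a x)) / inner x a"
proof -
  obtain g where g: "polyfun g" "\<forall>x. inner x a \<noteq> 0 \<longrightarrow> g x = (f x - f (tau a x)) / inner x a"
    using ex_polyfun_difference_quotient[OF assms] by blast
  have "rho a f = g"
    unfolding rho_def
  proof (rule the_equality)
    fix h assume "polyfun h \<and> (\<forall>x. inner x a \<noteq> 0 \<longrightarrow> h x = (f x - f (tau a x)) / inner x a)"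
    then show "h = g"
      using g assms(1) by (intro continuous_eq_off_hyperplane[of h g a] polyfun_isCont) auto
  qed (use g in blast)
  then show "polyfun (rho a f)" "inner x a \<noteq> 0 \<Longrightarrow> rho a f x = (f x - f (tau a x)) / inner x a"
    using g by auto
qed

lemma inner_tau_orthogonal: "inner a b = 0 \<Longrightarrow> inner (tau a x) b = inner x b"
  by (simp add: tau_def inner_diff_left)

lemma tau_commute:
  assumes "inner a b = 0"
  shows "tau a (tau b x) = tau b (tau a x)"
proof -
  have ba: "inner (tau b x) a = inner x a"
    using assms inner_tau_orthogonal[of b a x] by (simp add: inner_commute)
  have ab: "inner (tau a x) b = inner x b"
    using assms inner_tau_orthogonal[of a b x] by simp
  show ?thesis
    unfolding tau_def[of a "tau b x"] tau_def[of b "tau a x"] ab ba by (simp add: tau_def algebra_simps)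
qed

lemma tau_translate: "inner v a = 0 \<Longrightarrow> tau a (x + t *\<^sub>R v) = tau a x + t *\<^sub>R v"
  by (simp add: tau_def inner_add_left algebra_simps)

lemma rho_second_difference:
  fixes a b :: "real^'n"
  assumes a: "a \<noteq> 0" and b: "b \<noteq> 0" and ab: "inner a b = 0" and f: "polyfun f"
    and xa: "inner x a \<noteq> 0" and xb: "inner x b \<noteq> 0"
  shows "rho a (rho b f) x
    = (f x - f (tau a x) - f (tau b x) + f (tau a (tau b x))) / (inner x a * inner x b)"
proof -
  have "rho a (rho b f) x = (rho b f x - rho b f (tau a x)) / inner x a"
    using rho_eq[OF a polyfun_rho[OF b f] xa] .
  also have "\<dots> = ((f x - f (tau b x)) / inner x b
      - (f (tau a x) - f (tau b (tau a x))) / inner x b) / inner x a"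
    using rho_eq[OF b f] xb inner_tau_orthogonal[OF ab, of x] by simp
  also have "\<dots> = (f x - f (tau a x) - f (tau b x) + f (tau a (tau b x))) / (inner x a * inner x b)"
    using xa xb tau_commute[OF ab, of x] by (simp add: field_simps)
  finally show ?thesis .
qed

lemma rho_commute:
  fixes a b :: "real^'n"
  assumes a: "a \<noteq> 0" and b: "b \<noteq> 0" and ab: "inner a b = 0" and f: "polyfun f"
  shows "rho a (rho b f) = rho b (rho a f)"
proof (rule continuous_eq_off_hyperplanes[of _ _ "a + b" a b])
  have ba: "inner b a = 0" using ab by (simp add: inner_commute)
  show "inner (a + b) a \<noteq> 0" "inner (a + b) b \<noteq> 0"
    using a b ab ba by (simp_all add: inner_add_left)
  show "isCont (rho a (rho b f)) x" "isCont (rho b (rho a f)) x" for x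
    by (intro polyfun_isCont polyfun_rho a b f)+
  show "rho a (rho b f) x = rho b (rho a f) x" if "inner x a \<noteq> 0" "inner x b \<noteq> 0" for x
    using rho_second_difference[OF a b ab f that] rho_second_difference[OF b a ba f that(2,1)]
      tau_commute[OF ab, of x] by (simp add: algebra_simps)
qed

lemma dir_deriv_rho:
  fixes a v :: "real^'n"
  assumes a: "a \<noteq> 0" and va: "inner v a = 0" and f: "polyfun f"
  shows "dir_deriv v (rho a f) = rho a (dir_deriv v f)"
proof (rule continuous_eq_off_hyperplane[OF _ _ a])
  show "isCont (dir_deriv v (rho a f)) x" "isCont (rho a (dir_deriv v f)) x" for x
    by (intro polyfun_isCont polyfun_rho polyfun_dir_deriv a f)+
  fix x :: "real^'n" assume xa: "inner x a \<noteq> 0"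
  have along_v: "(\<lambda>t. rho a f (x + t *\<^sub>R v))
      = (\<lambda>t. (f (x + t *\<^sub>R v) - f (tau a x + t *\<^sub>R v)) / inner x a)"
  proof
    fix t
    have "inner (x + t *\<^sub>R v) a = inner x a" using va by (simp add: inner_add_left)
    then show "rho a f (x + t *\<^sub>R v) = (f (x + t *\<^sub>R v) - f (tau a x + t *\<^sub>R v)) / inner x a"
      using rho_eq[OF a f] xa tau_translate[OF va, of x t] by simp
  qed
  have "((\<lambda>t. (f (x + t *\<^sub>R v) - f (tau a x + t *\<^sub>R v)) / inner x a)
      has_real_derivative dir_deriv v (rho a f) x) (at 0)"
    unfolding along_v[symmetric]
    by (intro has_real_derivative_dir_deriv polyfun_differentiable polyfun_rho a f)
  moreover have "((\<lambda>t. (f (x + t *\<^sub>R v) - f (tau a x + t *\<^sub>R v)) / inner x a)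
      has_real_derivative (dir_deriv v f x - dir_deriv v f (tau a x)) / inner x a) (at 0)"
    by (intro DERIV_cdivide DERIV_diff has_real_derivative_dir_deriv polyfun_differentiable f)
  ultimately have "dir_deriv v (rho a f) x = (dir_deriv v f x - dir_deriv v f (tau a x)) / inner x a"
    by (rule DERIV_unique)
  then show "dir_deriv v (rho a f) x = rho a (dir_deriv v f) x"
    using rho_eq[OF a polyfun_dir_deriv[OF f] xa] by simp
qed

lemma positive_orthogonal_subsystem_nonzero:
  "root_system R \<Longrightarrow> positive_orthogonal_subsystem R P \<Longrightarrow> a \<in> P \<Longrightarrow> a \<noteq> 0"
  unfolding root_system_def positive_orthogonal_subsystem_def orthogonal_subsystem_def
    subsystem_def by auto

lemma positive_orthogonal_subsystem_orthogonal:
  assumes "positive_orthogonal_subsystem R P" "a \<in> P" "b \<in> P" "a \<noteq> b"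
  shows "inner a b = 0"
proof -
  obtain S where S: "orthogonal_subsystem R S" "S = P \<union> uminus ` P" "P \<inter> uminus ` P = {}"
    using assms(1) unfolding positive_orthogonal_subsystem_def by blast
  have "b \<noteq> - a"
    using assms(2,3) S(3) by (metis disjoint_iff image_eqI minus_minus)
  then show ?thesis
    using S(1,2) assms(2-4) unfolding orthogonal_subsystem_def by auto
qed

theorem proposition3p1:
  fixes R P :: "(real^'n) set"
  assumes "root_system R"
    and "positive_orthogonal_subsystem R P"
  shows "(\<forall>ai\<in>P. \<forall>aj\<in>P. \<forall>f. polyfun f \<longrightarrow>
            rho ai (rho aj f) = rho aj (rho ai f))
       \<and> (\<forall>ai\<in>P. \<forall>v. inner v ai = 0 \<longrightarrow> (\<forall>f. polyfun f \<longrightarrow>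
            dir_deriv v (rho ai f) = rho ai (dir_deriv v f)))"
proof (intro conjI ballI allI impI)
  note nonzero = positive_orthogonal_subsystem_nonzero[OF assms]
  fix ai aj and f :: "real^'n \<Rightarrow> real"
  assume "ai \<in> P" "aj \<in> P" "polyfun f"
  then show "rho ai (rho aj f) = rho aj (rho ai f)"
    using rho_commute[OF nonzero nonzero positive_orthogonal_subsystem_orthogonal[OF assms(2)]]
    by (cases "ai = aj") auto
next
  fix ai v and f :: "real^'n \<Rightarrow> real"
  assume "ai \<in> P" "inner v ai = 0" "polyfun f"
  then show "dir_deriv v (rho ai f) = rho ai (dir_deriv v f)"
    using dir_deriv_rho positive_orthogonal_subsystem_nonzero[OF assms] by blast
qed

end
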